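(* Let $Q_{\boldsymbol{X}}$ be a probability distribution on a covariate space $\mathcal{X}$ and let $L_2(Q_{\boldsymbol{X}})$ be the space of square-integrable measurable functions with respect to $Q_{\boldsymbol{X}}$. Suppose that the model class $\mathcal{F}\subset L_2(Q_{\boldsymbol{X}})$ is convex and contains all site-specific CATEs, i.e. $\tau^{(s)}\in\mathcal{F}$ for all $s\in\{1,\ldots,S\}$. Then the oracle minimax regret CATE \[ f_{\text{regret}}^*(\cdot)=\underset{f\in\mathcal{F}}{\arg\min}\ \max_{Q\in\mathcal{C}(Q_{\boldsymbol{X}})}\Big\{\mathbb{E}_Q\big[(Y(1)-Y(0)-f(\boldsymbol{X}))^2\big]-\min_{f'\in\mathcal{F}}\mathbb{E}_Q\big[(Y(1)-Y(0)-f'(\boldsymbol{X}))^2\big]\Big\} \] can be identified as \[ f_{\text{regret}}^*(\cdot)=\sum_{s=1}^S q_s^*\,\tau^{(s)}(\cdot)\quad\text{with}\quad \boldsymbol{q}^*=\underset{\boldsymbol{q}\in\Delta_{S-1}}{\arg\min}\ \boldsymbol{q}^\top\Gamma\boldsymbol{q}-\boldsymbol{q}^\top\boldsymbol{d}, \] where $\Gamma$ is the $S\times S$ matrix with entries $\Gamma_{k,l}=\mathbb{E}_{Q_{\boldsymbol{X}}}[\tau^{(k)}(\boldsymbol{X})\tau^{(l)}(\boldsymbol{X})]$ for $k,l\in\{1,\ldots,S\}$, and $\boldsymbol{d}=(\Gamma_{1,1},\ldots,\Gamma_{S,S})^\top$ is its diagonal vector.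
   Context: Setting: there are $S$ source sites; site $s$ has a joint distribution $P^{(s)}$ of binary-treatment potential outcomes $(Y(1),Y(0))$ (real-valued) and covariates $\boldsymbol{X}\in\mathcal{X}$, with site-specific conditional average treatment effect (CATE) $\tau^{(s)}(\boldsymbol{x})=\mathbb{E}_{P^{(s)}}[Y(1)-Y(0)\mid \boldsymbol{X}=\boldsymbol{x}]$. For a joint distribution $Q$ of $(Y(1),Y(0),\boldsymbol{X})$, $\tau_Q(\boldsymbol{x})=\mathbb{E}_Q[Y(1)-Y(0)\mid\boldsymbol{X}=\boldsymbol{x}]$. $\Delta_{S-1}=\{\boldsymbol{q}\in\mathbb{R}^S:\sum_s q_s=1,\ \min_s q_s\ge 0\}$. The multisite uncertainty set is $\mathcal{C}(Q_{\boldsymbol{X}})=\{Q=(Q_{\boldsymbol{X}},Q_{(Y(1),Y(0))\mid\boldsymbol{X}}):\ \tau_Q(\cdot)=\sum_{s=1}^S q_s\tau^{(s)}(\cdot)\text{ for some }\boldsymbol{q}\in\Delta_{S-1}\}$, i.e. all joint distributions with covariate marginal $Q_{\boldsymbol{X}}$ whose CATE is a convex combination of the site CATEs. *)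

theory Defs
  imports "HOL-Probability.Probability"
begin

text \<open>Joint distributions Q of (Y(1), Y(0), X) are measures on real \<times> real \<times> 'x.
  For an outcome w = (y1, y0, x): fst w = y1, fst (snd w) = y0, snd (snd w) = x.\<close>

definition prob_simplex :: "nat \<Rightarrow> (nat \<Rightarrow> real) set" where
  "prob_simplex S = {q. (\<forall>s\<in>{1..S}. 0 \<le> q s) \<and> (\<Sum>s=1..S. q s) = 1}"

definition in_L2 :: "'x measure \<Rightarrow> ('x \<Rightarrow> real) \<Rightarrow> bool" where
  "in_L2 QX f \<longleftrightarrow> f \<in> borel_measurable QX \<and> integrable QX (\<lambda>x. (f x)\<^sup>2)"

definition convex_fset :: "('x \<Rightarrow> real) set \<Rightarrow> bool" where
  "convex_fset F \<longleftrightarrow> (\<forall>f\<in>F. \<forall>g\<in>F. \<forall>t::real. 0 \<le> t \<and> t \<le> 1 \<longrightarrow>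
      (\<lambda>x. t * f x + (1 - t) * g x) \<in> F)"

text \<open>g is (a version of) the CATE x \<mapsto> E_Q[Y(1) - Y(0) | X = x]: the defining
  property of conditional expectation, with the covariate marginal QX.\<close>
definition is_cate :: "(real \<times> real \<times> 'x) measure \<Rightarrow> 'x measure \<Rightarrow> ('x \<Rightarrow> real) \<Rightarrow> bool" where
  "is_cate Q QX g \<longleftrightarrow> g \<in> borel_measurable QX \<and> integrable QX g \<and>
     integrable Q (\<lambda>w. fst w - fst (snd w)) \<and>
     (\<forall>A\<in>sets QX. (\<integral>w. indicator A (snd (snd w)) * (fst w - fst (snd w)) \<partial>Q)
                  = (\<integral>x. indicator A x * g x \<partial>QX))"

text \<open>The multisite uncertainty set C(QX) (restricted to Q with E_Q[(Y(1)-Y(0))^2] finite,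
  so that the squared-error risks are finite).\<close>
definition multisite_set ::
  "'x measure \<Rightarrow> nat \<Rightarrow> (nat \<Rightarrow> 'x \<Rightarrow> real) \<Rightarrow> (real \<times> real \<times> 'x) measure set" where
  "multisite_set QX S tau = {Q.
      sets Q = sets (borel \<Otimes>\<^sub>M (borel \<Otimes>\<^sub>M QX)) \<and> prob_space Q \<and>
      distr Q QX (\<lambda>w. snd (snd w)) = QX \<and>
      integrable Q (\<lambda>w. (fst w - fst (snd w))\<^sup>2) \<and>
      (\<exists>q\<in>prob_simplex S. is_cate Q QX (\<lambda>x. \<Sum>s=1..S. q s * tau s x))}"

definition risk :: "(real \<times> real \<times> 'x) measure \<Rightarrow> ('x \<Rightarrow> real) \<Rightarrow> real" where
  "risk Q f = (\<integral>w. (fst w - fst (snd w) - f (snd (snd w)))\<^sup>2 \<partial>Q)"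

definition regret ::
  "'x measure \<Rightarrow> nat \<Rightarrow> (nat \<Rightarrow> 'x \<Rightarrow> real) \<Rightarrow> ('x \<Rightarrow> real) set \<Rightarrow> ('x \<Rightarrow> real) \<Rightarrow> real" where
  "regret QX S tau F f =
     (SUP Q \<in> multisite_set QX S tau. risk Q f - (INF f' \<in> F. risk Q f'))"

definition Gamma :: "'x measure \<Rightarrow> (nat \<Rightarrow> 'x \<Rightarrow> real) \<Rightarrow> nat \<Rightarrow> nat \<Rightarrow> real" where
  "Gamma QX tau k l = (\<integral>x. tau k x * tau l x \<partial>QX)"

definition quad_obj :: "'x measure \<Rightarrow> nat \<Rightarrow> (nat \<Rightarrow> 'x \<Rightarrow> real) \<Rightarrow> (nat \<Rightarrow> real) \<Rightarrow> real" where
  "quad_obj QX S tau q =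
     (\<Sum>k=1..S. \<Sum>l=1..S. q k * Gamma QX tau k l * q l) - (\<Sum>k=1..S. q k * Gamma QX tau k k)"

end

(*
  For Q in the multisite set with CATE tau_q = sum_s q_s tau_s, the excess risk of f in F under Q
  is the squared L2(QX) distance ||f - tau_q||^2, because tau_q itself lies in the convex class F.
  Every site CATE tau_s is realised by some Q, so regret(f) >= ||f - tau_s||^2 for all s.
  The bias-variance identity
    sum_s q_s ||f - tau_s||^2 = ||f - tau_q||^2 + V(q),   V(q) = E sum_s q_s (tau_s - tau_q)^2,
  together with V(q) = -(q' Gamma q - q' d) shows that the minimiser qstar of the quadratic
  programme maximises V; perturbing qstar towards a vertex gives ||tau_s - tau_qstar||^2 <= V(qstar)
  for every s. Hence regret(tau_qstar) <= V(qstar), whereas every f in F has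
    regret(f) >= sum_s qstar_s ||f - tau_s||^2 = ||f - tau_qstar||^2 + V(qstar)
              >= ||f - tau_qstar||^2 + regret(tau_qstar),
  which yields both optimality and uniqueness up to QX-null sets.
*)
theory Submission
  imports Defs
begin

abbreviation effect :: "real \<times> real \<times> 'x \<Rightarrow> real" where
  "effect w \<equiv> fst w - fst (snd w)"

abbreviation covariate :: "real \<times> real \<times> 'x \<Rightarrow> 'x" where
  "covariate w \<equiv> snd (snd w)"

abbreviation excess_risk ::
  "('x \<Rightarrow> real) set \<Rightarrow> (real \<times> real \<times> 'x) measure \<Rightarrow> ('x \<Rightarrow> real) \<Rightarrow> real" where
  "excess_risk F Q f \<equiv> risk Q f - (INF f'\<in>F. risk Q f')"

section \<open>Square-integrable functions\<close>

lemma in_L2_mult_integrable: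
  assumes "in_L2 M f" "in_L2 M g"
  shows "integrable M (\<lambda>x. f x * g x)"
proof (rule Bochner_Integration.integrable_bound)
  show "integrable M (\<lambda>x. (f x)\<^sup>2 + (g x)\<^sup>2)"
    using assms unfolding in_L2_def by auto
  show "(\<lambda>x. f x * g x) \<in> borel_measurable M"
    using assms unfolding in_L2_def by auto
  have "\<bar>f x * g x\<bar> \<le> (f x)\<^sup>2 + (g x)\<^sup>2" for x
  proof -
    have "\<bar>f x * g x\<bar> \<le> 2 * \<bar>f x\<bar> * \<bar>g x\<bar>"
      by (simp add: abs_mult)
    also have "\<dots> \<le> (f x)\<^sup>2 + (g x)\<^sup>2"
      using sum_squares_bound[of "\<bar>f x\<bar>" "\<bar>g x\<bar>"] by simp
    finally show ?thesis .
  qed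
  then show "AE x in M. norm (f x * g x) \<le> norm ((f x)\<^sup>2 + (g x)\<^sup>2)"
    by simp
qed

lemma in_L2_add:
  assumes "in_L2 M f" "in_L2 M g"
  shows "in_L2 M (\<lambda>x. f x + g x)"
proof -
  have "(\<lambda>x. (f x + g x)\<^sup>2) = (\<lambda>x. (f x)\<^sup>2 + 2 * (f x * g x) + (g x)\<^sup>2)"
    by (simp add: fun_eq_iff power2_sum)
  then show ?thesis
    using assms in_L2_mult_integrable[OF assms] unfolding in_L2_def by (simp add: borel_measurable_add)
qed

lemma in_L2_cmult: "in_L2 M f \<Longrightarrow> in_L2 M (\<lambda>x. c * f x)"
  unfolding in_L2_def by (simp add: power_mult_distrib borel_measurable_times)

lemma in_L2_diff: "in_L2 M f \<Longrightarrow> in_L2 M g \<Longrightarrow> in_L2 M (\<lambda>x. f x - g x)"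
  using in_L2_add[of M f "\<lambda>x. (-1) * g x"] in_L2_cmult[of M g "-1"] by simp

lemma in_L2_sum:
  "finite I \<Longrightarrow> (\<And>i. i \<in> I \<Longrightarrow> in_L2 M (f i)) \<Longrightarrow> in_L2 M (\<lambda>x. \<Sum>i\<in>I. f i x)"
proof (induction I rule: finite_induct)
  case empty
  then show ?case by (simp add: in_L2_def)
next
  case (insert i I)
  then show ?case using in_L2_add[of M "f i" "\<lambda>x. \<Sum>i\<in>I. f i x"] by simp
qed

lemma in_L2_integrable:
  assumes "finite_measure M" "in_L2 M f"
  shows "integrable M f"
proof -
  have "in_L2 M (\<lambda>x. 1)"
    using assms(1) by (simp add: in_L2_def finite_measure.integrable_const)
  from in_L2_mult_integrable[OF assms(2) this] show ?thesis by simp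
qed

lemma in_L2_square_diff_integrable:
  "in_L2 M f \<Longrightarrow> in_L2 M g \<Longrightarrow> integrable M (\<lambda>x. (f x - g x)\<^sup>2)"
  using in_L2_diff unfolding in_L2_def by blast

definition sq_dist :: "'a measure \<Rightarrow> ('a \<Rightarrow> real) \<Rightarrow> ('a \<Rightarrow> real) \<Rightarrow> real" where
  "sq_dist M f g = (\<integral>x. (f x - g x)\<^sup>2 \<partial>M)"

lemma sq_dist_nonneg: "0 \<le> sq_dist M f g"
  unfolding sq_dist_def by simp

lemma sq_dist_commute: "sq_dist M f g = sq_dist M g f"
  unfolding sq_dist_def by (simp add: power2_commute)

lemma sq_dist_eq_0_imp_AE_eq:
  assumes "in_L2 M f" "in_L2 M g" "sq_dist M f g = 0"
  shows "AE x in M. f x = g x"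
proof -
  have "AE x in M. (f x - g x)\<^sup>2 = 0"
    using assms integral_nonneg_eq_0_iff_AE[OF in_L2_square_diff_integrable[OF assms(1,2)]]
    unfolding sq_dist_def by simp
  then show ?thesis by simp
qed

section \<open>Weighted variance of a finite family\<close>

definition wvariance :: "'i set \<Rightarrow> ('i \<Rightarrow> real) \<Rightarrow> ('i \<Rightarrow> real) \<Rightarrow> real" where
  "wvariance I q v = (\<Sum>i\<in>I. q i * (v i - (\<Sum>j\<in>I. q j * v j))\<^sup>2)"

lemma sum_weighted_square_diff:
  fixes q v :: "'i \<Rightarrow> real"
  shows "(\<Sum>i\<in>I. q i * (a - v i)\<^sup>2)
     = (\<Sum>i\<in>I. q i * (v i)\<^sup>2) - 2 * a * (\<Sum>i\<in>I. q i * v i) + a\<^sup>2 * sum q I"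
proof -
  have "(\<Sum>i\<in>I. q i * (a - v i)\<^sup>2) = (\<Sum>i\<in>I. q i * (v i)\<^sup>2 - 2 * a * (q i * v i) + a\<^sup>2 * q i)"
    by (rule sum.cong) (auto simp: power2_diff algebra_simps)
  then show ?thesis
    by (simp add: sum.distrib sum_subtractf sum_distrib_left)
qed

lemma wvariance_eq:
  assumes "sum q I = 1"
  shows "wvariance I q v = (\<Sum>i\<in>I. q i * (v i)\<^sup>2) - (\<Sum>i\<in>I. q i * v i)\<^sup>2"
  unfolding wvariance_def power2_commute[of "v _"] sum_weighted_square_diff assms
  by (simp add: power2_eq_square)

lemma wvariance_eq_quadratic_form:
  assumes "sum q I = 1"
  shows "wvariance I q v
    = (\<Sum>i\<in>I. q i * (v i * v i)) - (\<Sum>k\<in>I. \<Sum>l\<in>I. q k * (v k * v l) * q l)"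
  unfolding wvariance_eq[OF assms]
  by (simp add: power2_eq_square sum_product algebra_simps)

lemma sum_weighted_square_diff_bias_variance:
  assumes "sum q I = 1"
  shows "(\<Sum>i\<in>I. q i * (a - v i)\<^sup>2) = (a - (\<Sum>i\<in>I. q i * v i))\<^sup>2 + wvariance I q v"
  unfolding wvariance_eq[OF assms] sum_weighted_square_diff assms
  by (simp add: power2_eq_square algebra_simps)

lemma wvariance_nonneg: "(\<And>i. i \<in> I \<Longrightarrow> 0 \<le> q i) \<Longrightarrow> 0 \<le> wvariance I q v"
  unfolding wvariance_def by (auto intro: sum_nonneg)

lemma sum_shifted_weight:
  fixes q v :: "'i \<Rightarrow> real"
  assumes "finite I" "s \<in> I"
  shows "(\<Sum>i\<in>I. ((1 - t) * q i + t * indicator {s} i) * v i)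
    = (1 - t) * (\<Sum>i\<in>I. q i * v i) + t * v s"
proof -
  have "(\<Sum>i\<in>I. ((1 - t) * q i + t * indicator {s} i) * v i)
      = (\<Sum>i\<in>I. (1 - t) * (q i * v i) + (if i = s then t * v s else 0))"
    by (rule sum.cong) (auto simp: algebra_simps)
  then show ?thesis
    using assms by (simp add: sum.distrib sum_distrib_left)
qed

lemma wvariance_shifted_weight:
  assumes "finite I" "s \<in> I" "sum q I = 1"
  shows "wvariance I (\<lambda>i. (1 - t) * q i + t * indicator {s} i) v
    = (1 - t) * wvariance I q v + t * (1 - t) * (v s - (\<Sum>i\<in>I. q i * v i))\<^sup>2"
proof -
  have shifted_sum: "sum (\<lambda>i. (1 - t) * q i + t * indicator {s} i) I = 1"
    using sum_shifted_weight[OF assms(1,2), of t q "\<lambda>_. 1"] assms(3) by simp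
  show ?thesis
    unfolding wvariance_eq[OF assms(3)] wvariance_eq[OF shifted_sum]
      sum_shifted_weight[OF assms(1,2)]
    by (simp add: power2_eq_square algebra_simps)
qed

lemma perturbation_bound_imp_le:
  fixes a b :: real
  assumes "0 \<le> b" and le: "\<And>t. 0 < t \<Longrightarrow> t \<le> 1 \<Longrightarrow> (1 - t) * b + t * (1 - t) * a \<le> b"
  shows "a \<le> b"
proof (rule ccontr)
  assume "\<not> a \<le> b"
  then have "b < a" "0 < a" using \<open>0 \<le> b\<close> by auto
  define t where "t = (a - b) / (2 * a)"
  have "0 < t" "t \<le> 1"
    unfolding t_def using \<open>b < a\<close> \<open>0 < a\<close> \<open>0 \<le> b\<close> by (auto simp: field_simps)
  moreover have "(1 - t) * b + t * (1 - t) * a = b + t * (a - b) / 2"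
    unfolding t_def using \<open>0 < a\<close> by (simp add: field_simps)
  ultimately have "t * (a - b) \<le> 0"
    using le[of t] by simp
  with \<open>0 < t\<close> \<open>b < a\<close> show False
    by (simp add: mult_le_0_iff)
qed

lemma convex_fset_sum:
  assumes "convex_fset F" "finite I" "sum q I = 1" "\<And>i. i \<in> I \<Longrightarrow> 0 \<le> q i"
    and "\<And>i. i \<in> I \<Longrightarrow> f i \<in> F"
  shows "(\<lambda>x. \<Sum>i\<in>I. q i * f i x) \<in> F"
  using assms(2-5)
proof (induction arbitrary: q rule: finite_induct)
  case empty
  then show ?case by simp
next
  case (insert i I)
  have "0 \<le> sum q I" using insert.prems by (simp add: sum_nonneg)
  show ?case
  proof (cases "sum q I = 0")
    case True
    then have "\<forall>j\<in>I. q j = 0" using insert by (simp add: sum_nonneg_eq_0_iff)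
    then show ?thesis using insert True by simp
  next
    case False
    with \<open>0 \<le> sum q I\<close> have pos: "0 < sum q I" by simp
    then have "(\<lambda>x. \<Sum>j\<in>I. q j / sum q I * f j x) \<in> F"
      using insert by (intro insert.IH) (simp_all flip: sum_divide_distrib)
    then have "(\<lambda>x. q i * f i x + (1 - q i) * (\<Sum>j\<in>I. q j / sum q I * f j x)) \<in> F"
      using assms(1) insert \<open>0 \<le> sum q I\<close> unfolding convex_fset_def by auto
    moreover have "1 - q i = sum q I" using insert by simp
    ultimately show ?thesis
      using insert pos by (simp add: sum_distrib_left)
  qed
qed

section \<open>Joint laws of potential outcomes and covariates\<close>

locale outcome_model =
  fixes Q :: "(real \<times> real \<times> 'x) measure" and QX :: "'x measure"
  assumes sets_Q: "sets Q = sets (borel \<Otimes>\<^sub>M (borel \<Otimes>\<^sub>M QX))"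
    and prob_space_Q: "prob_space Q"
    and distr_covariate: "distr Q QX covariate = QX"
    and effect_square_integrable: "integrable Q (\<lambda>w. (effect w)\<^sup>2)"
begin

lemma measurable_covariate: "covariate \<in> measurable Q QX"
proof -
  have "covariate \<in> measurable (borel \<Otimes>\<^sub>M (borel \<Otimes>\<^sub>M QX)) QX"
    by measurable
  then show ?thesis using measurable_cong_sets[OF sets_Q refl] by blast
qed

lemma effect_in_L2: "in_L2 Q effect"
proof -
  have "effect \<in> borel_measurable (borel \<Otimes>\<^sub>M (borel \<Otimes>\<^sub>M QX))"
    by measurable
  then show ?thesis
    using measurable_cong_sets[OF sets_Q refl] effect_square_integrable
    unfolding in_L2_def by blast
qed

lemma integral_covariate:
  fixes f :: "'x \<Rightarrow> real"
  assumes "f \<in> borel_measurable QX"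
  shows "(\<integral>x. f x \<partial>QX) = (\<integral>w. f (covariate w) \<partial>Q)"
  using integral_distr[OF measurable_covariate assms] by (simp add: distr_covariate)

lemma covariate_funcset: "covariate \<in> space Q \<rightarrow> space QX"
  using measurable_space[OF measurable_covariate] by blast

lemma in_L2_covariate:
  assumes "in_L2 QX f"
  shows "in_L2 Q (\<lambda>w. f (covariate w))"
proof -
  have f: "f \<in> borel_measurable QX" using assms unfolding in_L2_def by simp
  then have f2: "(\<lambda>x. (f x)\<^sup>2) \<in> borel_measurable QX" by measurable
  show ?thesis
    using assms integrable_distr_eq[OF measurable_covariate f2]
      measurable_compose[OF measurable_covariate f]
    unfolding in_L2_def by (simp add: distr_covariate)
qed

abbreviation covariate_algebra :: "(real \<times> real \<times> 'x) measure" where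
  "covariate_algebra \<equiv> vimage_algebra (space Q) covariate QX"

lemma finite_measure_subalgebra_covariate: "finite_measure_subalgebra Q covariate_algebra"
proof -
  interpret prob_space Q by (rule prob_space_Q)
  show ?thesis
    by unfold_locales
      (simp add: subalgebra_def sets_image_in_sets[OF refl measurable_covariate])
qed

lemma measurable_covariate_algebra: "covariate \<in> measurable covariate_algebra QX"
  by (rule measurable_vimage_algebra1[OF covariate_funcset])

lemma cond_exp_effect:
  assumes "is_cate Q QX g"
  shows "AE w in Q. real_cond_exp Q covariate_algebra effect w = g (covariate w)"
proof -
  interpret finite_measure_subalgebra Q covariate_algebra
    by (rule finite_measure_subalgebra_covariate)
  have g: "g \<in> borel_measurable QX" "integrable QX g"
    using assms unfolding is_cate_def by auto
  show ?thesis
  proof (rule real_cond_exp_charact)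
    show "integrable Q effect" using assms unfolding is_cate_def by simp
    show "integrable Q (\<lambda>w. g (covariate w))"
      using integrable_distr_eq[OF measurable_covariate g(1)] g(2) distr_covariate by simp
    show "(\<lambda>w. g (covariate w)) \<in> borel_measurable covariate_algebra"
      using measurable_compose[OF measurable_covariate_algebra g(1)] .
    fix A assume "A \<in> sets covariate_algebra"
    then obtain B where B: "B \<in> sets QX" and A: "A = covariate -` B \<inter> space Q"
      unfolding sets_vimage_algebra2[OF covariate_funcset] by auto
    have "(\<integral>w \<in> A. effect w \<partial>Q) = (\<integral>w. indicator B (covariate w) * effect w \<partial>Q)"
      unfolding set_lebesgue_integral_def A
      by (rule Bochner_Integration.integral_cong) (auto simp: indicator_def)
    also have "\<dots> = (\<integral>x. indicator B x * g x \<partial>QX)"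
      using assms B unfolding is_cate_def by simp
    also have "\<dots> = (\<integral>w. indicator B (covariate w) * g (covariate w) \<partial>Q)"
      by (rule integral_covariate) (use B g in measurable)
    also have "\<dots> = (\<integral>w \<in> A. g (covariate w) \<partial>Q)"
      unfolding set_lebesgue_integral_def A
      by (rule Bochner_Integration.integral_cong) (auto simp: indicator_def)
    finally show "(\<integral>w \<in> A. effect w \<partial>Q) = (\<integral>w \<in> A. g (covariate w) \<partial>Q)" .
  qed
qed

lemma integral_effect_mult:
  assumes "is_cate Q QX g" "in_L2 QX h"
  shows "(\<integral>w. effect w * h (covariate w) \<partial>Q) = (\<integral>x. g x * h x \<partial>QX)"
proof -
  interpret finite_measure_subalgebra Q covariate_algebra
    by (rule finite_measure_subalgebra_covariate)
  have h: "h \<in> borel_measurable QX" using assms(2) unfolding in_L2_def by simp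
  have g: "g \<in> borel_measurable QX" using assms(1) unfolding is_cate_def by simp
  have "(\<integral>w. h (covariate w) * effect w \<partial>Q)
      = (\<integral>w. h (covariate w) * real_cond_exp Q covariate_algebra effect w \<partial>Q)"
    using real_cond_exp_intg(2)[symmetric,
        OF in_L2_mult_integrable[OF in_L2_covariate[OF assms(2)] effect_in_L2]
           measurable_compose[OF measurable_covariate_algebra h]]
      effect_in_L2 unfolding in_L2_def by simp
  also have "\<dots> = (\<integral>w. h (covariate w) * g (covariate w) \<partial>Q)"
    using cond_exp_effect[OF assms(1)] by (intro integral_cong_AE) (use h g measurable_covariate in auto)
  also have "\<dots> = (\<integral>x. h x * g x \<partial>QX)"
    by (rule integral_covariate[symmetric]) (use h g in measurable)
  finally show ?thesis by (simp add: mult.commute)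
qed

lemma risk_eq:
  assumes "is_cate Q QX g" "in_L2 QX g" "in_L2 QX f"
  shows "risk Q f = (\<integral>w. (effect w)\<^sup>2 \<partial>Q) - (\<integral>x. (g x)\<^sup>2 \<partial>QX) + sq_dist QX f g"
proof -
  have fX: "in_L2 Q (\<lambda>w. f (covariate w))" by (rule in_L2_covariate[OF assms(3)])
  have "f \<in> borel_measurable QX" using assms(3) unfolding in_L2_def by simp
  then have f2: "(\<lambda>x. (f x)\<^sup>2) \<in> borel_measurable QX" by measurable
  have "risk Q f
      = (\<integral>w. (effect w)\<^sup>2 - 2 * (effect w * f (covariate w)) + (f (covariate w))\<^sup>2 \<partial>Q)"
    unfolding risk_def by (rule Bochner_Integration.integral_cong) (auto simp: power2_diff)
  also have "\<dots> = (\<integral>w. (effect w)\<^sup>2 \<partial>Q) - 2 * (\<integral>w. effect w * f (covariate w) \<partial>Q)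
      + (\<integral>w. (f (covariate w))\<^sup>2 \<partial>Q)"
    using in_L2_mult_integrable[OF effect_in_L2 fX] fX effect_in_L2 unfolding in_L2_def by simp
  also have "\<dots> = (\<integral>w. (effect w)\<^sup>2 \<partial>Q) - 2 * (\<integral>x. g x * f x \<partial>QX) + (\<integral>x. (f x)\<^sup>2 \<partial>QX)"
    using integral_effect_mult[OF assms(1,3)] integral_covariate[OF f2] by simp
  also have "\<dots> = (\<integral>w. (effect w)\<^sup>2 \<partial>Q) - (\<integral>x. (g x)\<^sup>2 \<partial>QX) + sq_dist QX f g"
  proof -
    have "sq_dist QX f g = (\<integral>x. (f x)\<^sup>2 - 2 * (g x * f x) + (g x)\<^sup>2 \<partial>QX)"
      unfolding sq_dist_def
      by (rule Bochner_Integration.integral_cong) (auto simp: power2_diff algebra_simps)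
    also have "\<dots> = (\<integral>x. (f x)\<^sup>2 \<partial>QX) - 2 * (\<integral>x. g x * f x \<partial>QX) + (\<integral>x. (g x)\<^sup>2 \<partial>QX)"
      using in_L2_mult_integrable[OF assms(2,3)] assms(2,3) unfolding in_L2_def by simp
    finally show ?thesis by simp
  qed
  finally show ?thesis .
qed

end

definition deterministic_law :: "'x measure \<Rightarrow> ('x \<Rightarrow> real) \<Rightarrow> (real \<times> real \<times> 'x) measure" where
  "deterministic_law QX g = distr QX (borel \<Otimes>\<^sub>M (borel \<Otimes>\<^sub>M QX)) (\<lambda>x. (g x, 0, x))"

lemma
  fixes QX :: "'x measure"
  assumes QX: "prob_space QX" and g: "in_L2 QX g"
  shows outcome_model_deterministic_law: "outcome_model (deterministic_law QX g) QX"
    and is_cate_deterministic_law: "is_cate (deterministic_law QX g) QX g"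
proof -
  have [measurable]: "g \<in> borel_measurable QX" using g unfolding in_L2_def by simp
  have law: "(\<lambda>x. (g x, 0::real, x)) \<in> measurable QX (borel \<Otimes>\<^sub>M (borel \<Otimes>\<^sub>M QX))"
    by measurable
  have integral_law: "(\<integral>w. f w \<partial>deterministic_law QX g) = (\<integral>x. f (g x, 0, x) \<partial>QX)"
    and integrable_law: "integrable (deterministic_law QX g) f \<longleftrightarrow> integrable QX (\<lambda>x. f (g x, 0, x))"
    if "f \<in> borel_measurable (borel \<Otimes>\<^sub>M (borel \<Otimes>\<^sub>M QX))" for f :: "real \<times> real \<times> 'x \<Rightarrow> real"
    unfolding deterministic_law_def
    using integral_distr[OF law that] integrable_distr_eq[OF law that] by simp_all
  have covariate: "covariate \<in> measurable (borel \<Otimes>\<^sub>M (borel \<Otimes>\<^sub>M QX)) QX"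
    by measurable
  have "distr (deterministic_law QX g) QX covariate = QX"
    unfolding deterministic_law_def distr_distr[OF covariate law] by (simp add: comp_def)
  then show "outcome_model (deterministic_law QX g) QX"
    using g prob_space.prob_space_distr[OF QX law] integrable_law[of "\<lambda>w. (effect w)\<^sup>2"]
    unfolding outcome_model_def in_L2_def deterministic_law_def by simp
  show "is_cate (deterministic_law QX g) QX g"
    unfolding is_cate_def
    using in_L2_integrable[OF prob_space.finite_measure[OF QX] g]
      integrable_law[of effect] integral_law
    by simp
qed

lemma multisite_set_iff:
  "Q \<in> multisite_set QX S tau \<longleftrightarrow>
     outcome_model Q QX \<and> (\<exists>q\<in>prob_simplex S. is_cate Q QX (\<lambda>x. \<Sum>s=1..S. q s * tau s x))"
  unfolding multisite_set_def outcome_model_def by auto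

section \<open>The multisite uncertainty set\<close>

lemma prob_simplexD:
  assumes "q \<in> prob_simplex S"
  shows "sum q {1..S} = 1" and "s \<in> {1..S} \<Longrightarrow> 0 \<le> q s"
  using assms unfolding prob_simplex_def by auto

lemma prob_simplex_sum_le:
  assumes "q \<in> prob_simplex S" "\<And>s. s \<in> {1..S} \<Longrightarrow> a s \<le> c"
  shows "(\<Sum>s=1..S. q s * a s) \<le> c"
proof -
  have "(\<Sum>s=1..S. q s * a s) \<le> (\<Sum>s=1..S. q s * c)"
    using assms by (intro sum_mono mult_left_mono) (auto dest: prob_simplexD)
  also have "\<dots> = c"
    using prob_simplexD(1)[OF assms(1)] by (simp flip: sum_distrib_right)
  finally show ?thesis .
qed

lemma indicator_in_prob_simplex: "s \<in> {1..S} \<Longrightarrow> indicator {s} \<in> prob_simplex S"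
  unfolding prob_simplex_def by (auto simp: indicator_def)

lemma shifted_weight_in_prob_simplex:
  assumes "q \<in> prob_simplex S" "s \<in> {1..S}" "0 \<le> t" "t \<le> 1"
  shows "(\<lambda>r. (1 - t) * q r + t * indicator {s} r) \<in> prob_simplex S"
  using assms sum_shifted_weight[of "{1..S}" s t q "\<lambda>_. 1"]
  unfolding prob_simplex_def by auto

locale multisite =
  fixes QX :: "'x measure" and S :: nat and tau :: "nat \<Rightarrow> 'x \<Rightarrow> real"
    and F :: "('x \<Rightarrow> real) set"
  assumes prob_space_QX: "prob_space QX"
    and F_in_L2: "\<forall>f\<in>F. in_L2 QX f"
    and convex_F: "convex_fset F"
    and tau_in_F: "\<forall>s\<in>{1..S}. tau s \<in> F"
begin

definition mix :: "(nat \<Rightarrow> real) \<Rightarrow> 'x \<Rightarrow> real" where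
  "mix q = (\<lambda>x. \<Sum>s=1..S. q s * tau s x)"

definition dispersion :: "(nat \<Rightarrow> real) \<Rightarrow> real" where
  "dispersion q = (\<integral>x. wvariance {1..S} q (\<lambda>s. tau s x) \<partial>QX)"

lemma tau_in_L2: "s \<in> {1..S} \<Longrightarrow> in_L2 QX (tau s)"
  using tau_in_F F_in_L2 by auto

lemma mix_in_L2: "in_L2 QX (mix q)"
  unfolding mix_def by (intro in_L2_sum in_L2_cmult tau_in_L2) auto

lemma mix_in_F: "q \<in> prob_simplex S \<Longrightarrow> mix q \<in> F"
  unfolding mix_def using tau_in_F
  by (intro convex_fset_sum[OF convex_F]) (auto dest: prob_simplexD)

lemma mix_indicator: "s \<in> {1..S} \<Longrightarrow> mix (indicator {s}) = tau s"
  unfolding mix_def by (simp add: indicator_def if_distrib)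

lemma excess_risk_eq:
  assumes "outcome_model Q QX" "q \<in> prob_simplex S" "is_cate Q QX (mix q)" "f \<in> F"
  shows "excess_risk F Q f = sq_dist QX f (mix q)"
proof -
  define K where "K = (\<integral>w. (effect w)\<^sup>2 \<partial>Q) - (\<integral>x. (mix q x)\<^sup>2 \<partial>QX)"
  have risk: "risk Q f' = K + sq_dist QX f' (mix q)" if "f' \<in> F" for f'
    unfolding K_def using outcome_model.risk_eq[OF assms(1,3) mix_in_L2] that F_in_L2 by auto
  have "(INF f'\<in>F. risk Q f') = K"
  proof (rule cInf_eq_minimum)
    have "risk Q (mix q) = K"
      using risk[OF mix_in_F[OF assms(2)]] by (simp add: sq_dist_def)
    then show "K \<in> risk Q ` F"
      using mix_in_F[OF assms(2)] by (auto intro: image_eqI[where x = "mix q"])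
  next
    fix y assume "y \<in> risk Q ` F"
    then obtain f' where "f' \<in> F" "y = risk Q f'" by blast
    then show "K \<le> y" using risk sq_dist_nonneg by simp
  qed
  then show ?thesis using risk[OF assms(4)] by simp
qed

lemma excess_risk_multisite:
  assumes "Q \<in> multisite_set QX S tau" "f \<in> F"
  obtains q where "q \<in> prob_simplex S" "excess_risk F Q f = sq_dist QX f (mix q)"
proof -
  obtain q where "outcome_model Q QX" "q \<in> prob_simplex S" "is_cate Q QX (mix q)"
    using assms(1) unfolding multisite_set_iff mix_def by blast
  then show ?thesis using that excess_risk_eq[OF _ _ _ assms(2)] by blast
qed

lemma deterministic_law_in_multisite_set:
  assumes "s \<in> {1..S}"
  shows "deterministic_law QX (tau s) \<in> multisite_set QX S tau"
proof -
  have "is_cate (deterministic_law QX (tau s)) QX (mix (indicator {s}))"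
    using is_cate_deterministic_law[OF prob_space_QX tau_in_L2[OF assms]] mix_indicator[OF assms]
    by simp
  then show ?thesis
    unfolding multisite_set_iff mix_def
    using outcome_model_deterministic_law[OF prob_space_QX tau_in_L2[OF assms]]
      indicator_in_prob_simplex[OF assms]
    by blast
qed

lemma excess_risk_deterministic_law:
  assumes "s \<in> {1..S}" "f \<in> F"
  shows "excess_risk F (deterministic_law QX (tau s)) f
    = sq_dist QX f (tau s)"
  using excess_risk_eq[OF outcome_model_deterministic_law[OF prob_space_QX tau_in_L2]
      indicator_in_prob_simplex _ assms(2)]
    is_cate_deterministic_law[OF prob_space_QX tau_in_L2] mix_indicator assms(1)
  by simp

lemma integrable_wvariance: "integrable QX (\<lambda>x. wvariance {1..S} q (\<lambda>s. tau s x))"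
  unfolding wvariance_def
  using in_L2_square_diff_integrable[OF tau_in_L2 mix_in_L2, unfolded mix_def]
  by (intro Bochner_Integration.integrable_sum integrable_mult_right) auto

lemma dispersion_nonneg: "q \<in> prob_simplex S \<Longrightarrow> 0 \<le> dispersion q"
  unfolding dispersion_def
  by (intro Bochner_Integration.integral_nonneg wvariance_nonneg) (auto dest: prob_simplexD)

lemma sum_sq_dist_bias_variance:
  assumes "in_L2 QX f" "q \<in> prob_simplex S"
  shows "(\<Sum>s=1..S. q s * sq_dist QX f (tau s)) = sq_dist QX f (mix q) + dispersion q"
proof -
  have "(\<Sum>s=1..S. q s * sq_dist QX f (tau s)) = (\<integral>x. (\<Sum>s=1..S. q s * (f x - tau s x)\<^sup>2) \<partial>QX)"
    unfolding sq_dist_def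
    using in_L2_square_diff_integrable[OF assms(1) tau_in_L2] by simp
  also have "\<dots> = (\<integral>x. (f x - mix q x)\<^sup>2 + wvariance {1..S} q (\<lambda>s. tau s x) \<partial>QX)"
    unfolding mix_def
    using sum_weighted_square_diff_bias_variance[OF prob_simplexD(1)[OF assms(2)]] by simp
  also have "\<dots> = sq_dist QX f (mix q) + dispersion q"
    unfolding sq_dist_def dispersion_def
    using in_L2_square_diff_integrable[OF assms(1) mix_in_L2] integrable_wvariance by simp
  finally show ?thesis .
qed

lemma quad_obj_eq_neg_dispersion:
  assumes "q \<in> prob_simplex S"
  shows "quad_obj QX S tau q = - dispersion q"
proof -
  have tau_mult: "integrable QX (\<lambda>x. tau k x * tau l x)" if "k \<in> {1..S}" "l \<in> {1..S}" for k l
    using in_L2_mult_integrable[OF tau_in_L2 tau_in_L2] that by blast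
  have "dispersion q = (\<integral>x. (\<Sum>i=1..S. q i * (tau i x * tau i x))
      - (\<Sum>k=1..S. \<Sum>l=1..S. q k * (tau k x * tau l x) * q l) \<partial>QX)"
    unfolding dispersion_def wvariance_eq_quadratic_form[OF prob_simplexD(1)[OF assms]] ..
  also have "\<dots> = (\<Sum>i=1..S. q i * Gamma QX tau i i)
      - (\<Sum>k=1..S. \<Sum>l=1..S. q k * Gamma QX tau k l * q l)"
  proof -
    have "(\<integral>x. (\<Sum>i=1..S. q i * (tau i x * tau i x)) \<partial>QX) = (\<Sum>i=1..S. q i * Gamma QX tau i i)"
      unfolding Gamma_def by (subst Bochner_Integration.integral_sum) (auto simp: tau_mult)
    moreover have "(\<integral>x. (\<Sum>l=1..S. q k * (tau k x * tau l x) * q l) \<partial>QX)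
        = (\<Sum>l=1..S. q k * Gamma QX tau k l * q l)" if "k \<in> {1..S}" for k
      unfolding Gamma_def using that
      by (subst Bochner_Integration.integral_sum) (auto simp: tau_mult)
    then have "(\<integral>x. (\<Sum>k=1..S. \<Sum>l=1..S. q k * (tau k x * tau l x) * q l) \<partial>QX)
        = (\<Sum>k=1..S. \<Sum>l=1..S. q k * Gamma QX tau k l * q l)"
      by (subst Bochner_Integration.integral_sum) (auto simp: tau_mult)
    moreover have "integrable QX (\<lambda>x. \<Sum>k=1..S. \<Sum>l=1..S. q k * (tau k x * tau l x) * q l)"
      by (intro Bochner_Integration.integrable_sum integrable_mult_left integrable_mult_right tau_mult)
        auto
    moreover have "integrable QX (\<lambda>x. \<Sum>i=1..S. q i * (tau i x * tau i x))"
      by (intro Bochner_Integration.integrable_sum integrable_mult_right tau_mult) auto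
    ultimately show ?thesis
      by simp
  qed
  finally show ?thesis unfolding quad_obj_def by linarith
qed

lemma dispersion_shifted_weight:
  assumes "q \<in> prob_simplex S" "s \<in> {1..S}"
  shows "dispersion (\<lambda>r. (1 - t) * q r + t * indicator {s} r)
    = (1 - t) * dispersion q + t * (1 - t) * sq_dist QX (tau s) (mix q)"
proof -
  have "dispersion (\<lambda>r. (1 - t) * q r + t * indicator {s} r)
      = (\<integral>x. (1 - t) * wvariance {1..S} q (\<lambda>s. tau s x)
          + t * (1 - t) * (tau s x - mix q x)\<^sup>2 \<partial>QX)"
    unfolding dispersion_def mix_def
    by (intro Bochner_Integration.integral_cong refl wvariance_shifted_weight)
      (use assms prob_simplexD(1) in auto)
  also have "\<dots> = (1 - t) * dispersion q + t * (1 - t) * sq_dist QX (tau s) (mix q)"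
    unfolding dispersion_def sq_dist_def
    using integrable_wvariance in_L2_square_diff_integrable[OF tau_in_L2[OF assms(2)] mix_in_L2]
    by (subst Bochner_Integration.integral_add) auto
  finally show ?thesis .
qed

lemma sq_dist_mix_le:
  assumes "in_L2 QX f" "q \<in> prob_simplex S"
  shows "sq_dist QX f (mix q) \<le> (\<Sum>s=1..S. q s * sq_dist QX f (tau s))"
  using sum_sq_dist_bias_variance[OF assms] dispersion_nonneg[OF assms(2)] by simp

lemma sq_dist_site_le_dispersion:
  assumes qstar: "qstar \<in> prob_simplex S"
    and min: "\<forall>q\<in>prob_simplex S. quad_obj QX S tau qstar \<le> quad_obj QX S tau q"
    and s: "s \<in> {1..S}"
  shows "sq_dist QX (tau s) (mix qstar) \<le> dispersion qstar"
  \<comment> \<open>qstar maximises the dispersion, so moving it towards the vertex s cannot increase it\<close>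
proof (rule perturbation_bound_imp_le)
  show "0 \<le> dispersion qstar" by (rule dispersion_nonneg[OF qstar])
  fix t :: real assume "0 < t" "t \<le> 1"
  then have shifted: "(\<lambda>r. (1 - t) * qstar r + t * indicator {s} r) \<in> prob_simplex S"
    by (intro shifted_weight_in_prob_simplex[OF qstar s]) auto
  with min have "quad_obj QX S tau qstar \<le> quad_obj QX S tau (\<lambda>r. (1 - t) * qstar r + t * indicator {s} r)"
    by blast
  then have "dispersion (\<lambda>r. (1 - t) * qstar r + t * indicator {s} r) \<le> dispersion qstar"
    unfolding quad_obj_eq_neg_dispersion[OF qstar] quad_obj_eq_neg_dispersion[OF shifted] by simp
  then show "(1 - t) * dispersion qstar + t * (1 - t) * sq_dist QX (tau s) (mix qstar)
      \<le> dispersion qstar"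
    unfolding dispersion_shifted_weight[OF qstar s] .
qed

lemma regret_bdd_above:
  assumes "f \<in> F"
  shows "bdd_above ((\<lambda>Q. excess_risk F Q f) ` multisite_set QX S tau)"
proof (rule bdd_aboveI)
  fix y assume "y \<in> (\<lambda>Q. excess_risk F Q f) ` multisite_set QX S tau"
  then obtain Q where Q: "Q \<in> multisite_set QX S tau"
    and y: "y = excess_risk F Q f"
    by blast
  obtain q where q: "q \<in> prob_simplex S"
    and excess: "excess_risk F Q f = sq_dist QX f (mix q)"
    by (rule excess_risk_multisite[OF Q assms])
  have "sq_dist QX f (mix q) \<le> (\<Sum>s=1..S. q s * sq_dist QX f (tau s))"
    using sq_dist_mix_le[OF _ q] assms F_in_L2 by blast
  also have "\<dots> \<le> (\<Sum>s=1..S. sq_dist QX f (tau s))"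
    by (intro prob_simplex_sum_le[OF q] member_le_sum) (auto simp: sq_dist_nonneg)
  finally show "y \<le> (\<Sum>s=1..S. sq_dist QX f (tau s))" unfolding y excess .
qed

lemma sq_dist_site_le_regret:
  assumes "f \<in> F" "s \<in> {1..S}"
  shows "sq_dist QX f (tau s) \<le> regret QX S tau F f"
  unfolding regret_def excess_risk_deterministic_law[OF assms(2,1), symmetric]
  by (rule cSUP_upper[OF deterministic_law_in_multisite_set[OF assms(2)] regret_bdd_above[OF assms(1)]])

lemma regret_mix_le_dispersion:
  assumes qstar: "qstar \<in> prob_simplex S"
    and min: "\<forall>q\<in>prob_simplex S. quad_obj QX S tau qstar \<le> quad_obj QX S tau q"
  shows "regret QX S tau F (mix qstar) \<le> dispersion qstar"
  unfolding regret_def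
proof (rule cSUP_least)
  have "{1..S} \<noteq> {}" using prob_simplexD(1)[OF qstar] by (cases "S = 0") auto
  then show "multisite_set QX S tau \<noteq> {}"
    using deterministic_law_in_multisite_set by blast
  fix Q assume Q: "Q \<in> multisite_set QX S tau"
  obtain q where q: "q \<in> prob_simplex S"
    and excess: "excess_risk F Q (mix qstar) = sq_dist QX (mix qstar) (mix q)"
    by (rule excess_risk_multisite[OF Q mix_in_F[OF qstar]])
  have "sq_dist QX (mix qstar) (mix q) \<le> (\<Sum>s=1..S. q s * sq_dist QX (mix qstar) (tau s))"
    by (rule sq_dist_mix_le[OF mix_in_L2 q])
  also have "\<dots> \<le> dispersion qstar"
    using sq_dist_site_le_dispersion[OF qstar min]
    by (intro prob_simplex_sum_le[OF q]) (simp add: sq_dist_commute[of QX "mix qstar"])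
  finally show "excess_risk F Q (mix qstar) \<le> dispersion qstar"
    unfolding excess .
qed

lemma regret_mix_add_sq_dist_le:
  assumes qstar: "qstar \<in> prob_simplex S"
    and min: "\<forall>q\<in>prob_simplex S. quad_obj QX S tau qstar \<le> quad_obj QX S tau q"
    and f: "f \<in> F"
  shows "regret QX S tau F (mix qstar) + sq_dist QX f (mix qstar) \<le> regret QX S tau F f"
proof -
  have "regret QX S tau F (mix qstar) + sq_dist QX f (mix qstar)
      \<le> sq_dist QX f (mix qstar) + dispersion qstar"
    using regret_mix_le_dispersion[OF qstar min] by simp
  also have "\<dots> = (\<Sum>s=1..S. qstar s * sq_dist QX f (tau s))"
    using sum_sq_dist_bias_variance[OF _ qstar] f F_in_L2 by simp
  also have "\<dots> \<le> regret QX S tau F f"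
    by (rule prob_simplex_sum_le[OF qstar sq_dist_site_le_regret[OF f]])
  finally show ?thesis .
qed

end

theorem theorem1:
  fixes QX :: "'x measure" and S :: nat and tau :: "nat \<Rightarrow> 'x \<Rightarrow> real"
    and F :: "('x \<Rightarrow> real) set" and qstar :: "nat \<Rightarrow> real"
  assumes "prob_space QX"
    and "\<forall>f\<in>F. in_L2 QX f"
    and "convex_fset F"
    and "\<forall>s\<in>{1..S}. tau s \<in> F"
    and "qstar \<in> prob_simplex S"
    and "\<forall>q\<in>prob_simplex S. quad_obj QX S tau qstar \<le> quad_obj QX S tau q"
  shows "(\<lambda>x. \<Sum>s=1..S. qstar s * tau s x) \<in> F
    \<and> (\<forall>f\<in>F. regret QX S tau F (\<lambda>x. \<Sum>s=1..S. qstar s * tau s x) \<le> regret QX S tau F f)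
    \<and> (\<forall>f\<in>F. (\<forall>g\<in>F. regret QX S tau F f \<le> regret QX S tau F g)
          \<longrightarrow> (AE x in QX. f x = (\<Sum>s=1..S. qstar s * tau s x)))"
proof -
  interpret multisite QX S tau F
    using assms(1-4) by (rule multisite.intro)
  note excess = regret_mix_add_sq_dist_le[OF assms(5,6)]
  have "mix qstar \<in> F"
    by (rule mix_in_F[OF assms(5)])
  moreover have "regret QX S tau F (mix qstar) \<le> regret QX S tau F f" if "f \<in> F" for f
    using excess[OF that] sq_dist_nonneg[of QX f "mix qstar"] by linarith
  moreover have "AE x in QX. f x = mix qstar x"
    if f: "f \<in> F" and "\<forall>g\<in>F. regret QX S tau F f \<le> regret QX S tau F g" for f
  proof (rule sq_dist_eq_0_imp_AE_eq)
    have "regret QX S tau F f \<le> regret QX S tau F (mix qstar)"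
      using that \<open>mix qstar \<in> F\<close> by blast
    then show "sq_dist QX f (mix qstar) = 0"
      using excess[OF f] sq_dist_nonneg[of QX f "mix qstar"] by linarith
  qed (use f F_in_L2 mix_in_L2 in auto)
  ultimately show ?thesis
    unfolding mix_def by blast
qed

end
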